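(* Let $q>0$ and $r\ge 0$ be real numbers. For every integer $n\ge 0$, $$B_n^q(r)=\sum_{k=0}^n\frac{1}{q^k\,(k+1)}\sum_{j=0}^{k}(-1)^{j}\binom{k}{j}(r+jq)^n,$$ where $B_n^q(r)$ is as defined in the context.
   Context: The Bernoulli polynomials with a $q$ parameter $B_n^q(r)$ are defined by the formal power series identity in $t$ $$\sum_{n=0}^{\infty}B_n^q(r)\frac{t^n}{n!}=\frac{q\,e^{rt}}{1-e^{qt}}\sum_{k=1}^{\infty}\left(\frac{1-e^{qt}}{q}\right)^k\frac{1}{k}.$$ *)

theory Defs
  imports "HOL-Computational_Algebra.Formal_Power_Series"
begin

definition bern_q_gf :: "real \<Rightarrow> real \<Rightarrow> real fps" where
  "bern_q_gf q r =
     (fps_const q * fps_exp r *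
       (\<Sum>k. fps_const (1 / of_nat (Suc k)) * ((1 - fps_exp q) / fps_const q) ^ Suc k))
     / (1 - fps_exp q)"

definition bern_q :: "real \<Rightarrow> nat \<Rightarrow> real \<Rightarrow> real" where
  "bern_q q n r = fact n * (fps_nth (bern_q_gf q r) n)"

end

(*
  Put V = (1 - e^(qt))/q, a power series without constant term.  The series in the
  generating function is -ln(1 - V) = V * (A o V) with A(x) = sum_k x^k/(k+1), so the factor
  q V cancels against the denominator 1 - e^(qt) and the generating function is
  e^(rt) * (A o V).  As V^k starts in degree k, only k <= n contribute to the n-th coefficient,
  and the binomial theorem gives e^(rt) V^k = q^(-k) sum_j (-1)^j (k choose j) e^((r+jq)t).
*)

theory Submission
  imports Defs
begin

unbundle fps_syntax

text \<open>The library's \<open>sums_Suc_iff\<close> is stated for normed vector spaces; formal power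
  series only form a metric space.\<close>

lemma sums_Suc_if_zero_head:
  fixes f :: "nat \<Rightarrow> 'a::{topological_space,comm_monoid_add}"
  assumes "f 0 = 0" and "f sums s"
  shows "(\<lambda>k. f (Suc k)) sums s"
proof -
  have "(\<lambda>N. sum f {..<Suc N}) \<longlonglongrightarrow> s"
    using assms(2) unfolding sums_def by (rule LIMSEQ_Suc)
  then show ?thesis
    unfolding sums_def sum.lessThan_Suc_shift assms(1) by simp
qed

lemma fps_compose_nth_eq_partial_sum:
  fixes a b :: "'a::comm_ring_1 fps"
  assumes "b $ 0 = 0" and "m < N"
  shows "(a oo b) $ m = (\<Sum>k<N. fps_const (a $ k) * b ^ k) $ m"
proof -
  have "(\<Sum>k<N. fps_const (a $ k) * b ^ k) $ m = (\<Sum>k<N. a $ k * (b ^ k) $ m)"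
    by (simp add: fps_sum_nth)
  also have "\<dots> = (\<Sum>k=0..m. a $ k * (b ^ k) $ m)"
    using assms startsby_zero_power_prefix[OF assms(1)]
    by (intro sum.mono_neutral_right) auto
  finally show ?thesis by (simp add: fps_compose_nth)
qed

lemma fps_compose_sums:
  fixes a b :: "'a::comm_ring_1 fps"
  assumes "b $ 0 = 0"
  shows "(\<lambda>k. fps_const (a $ k) * b ^ k) sums (a oo b)"
  unfolding sums_def
proof (rule tendsto_fpsI)
  fix m
  show "\<forall>\<^sub>F N in sequentially.
      (\<Sum>k<N. fps_const (a $ k) * b ^ k) $ m = (a oo b) $ m"
    using fps_compose_nth_eq_partial_sum[OF assms, symmetric]
    by (intro eventually_sequentiallyI[of "Suc m"]) simp
qed

lemma fps_mult_compose_nth: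
  fixes a b f :: "'a::comm_ring_1 fps"
  assumes "b $ 0 = 0"
  shows "(f * (a oo b)) $ n = (\<Sum>k\<le>n. a $ k * (f * b ^ k) $ n)"
proof -
  have "(f * (a oo b)) $ n = (f * (\<Sum>k<Suc n. fps_const (a $ k) * b ^ k)) $ n"
    unfolding fps_mult_nth
    by (intro sum.cong refl arg_cong2[where f = "(*)"] fps_compose_nth_eq_partial_sum[OF assms])
      auto
  also have "\<dots> = (\<Sum>k\<le>n. a $ k * (f * b ^ k) $ n)"
    by (simp add: lessThan_Suc_atMost sum_distrib_left fps_sum_nth mult.left_commute[of f])
  finally show ?thesis .
qed

lemma fps_exp_mult_one_minus_fps_exp_power_nth:
  fixes q r :: "'a::field_char_0"
  shows "(fps_exp r * (1 - fps_exp q) ^ k) $ n =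
    (\<Sum>j\<le>k. (-1) ^ j * of_nat (k choose j) * (r + of_nat j * q) ^ n) / fact n"
proof -
  have binomial: "(1 - fps_exp q) ^ k = (\<Sum>j\<le>k. of_nat (k choose j) * (- fps_exp q) ^ j)"
    using binomial_ring[of "- fps_exp q" 1 k] by simp
  have summand: "fps_exp r * (of_nat (k choose j) * (- fps_exp q) ^ j) =
      fps_const ((-1) ^ j * of_nat (k choose j)) * fps_exp (r + of_nat j * q)" for j
  proof -
    have "(-1 :: 'a fps) ^ j = fps_const ((-1) ^ j)"
      by (simp add: fps_const_power[symmetric] fps_const_neg[symmetric])
    then have "(- fps_exp q) ^ j = fps_const ((-1) ^ j) * fps_exp (of_nat j * q)"
      unfolding power_minus[of "fps_exp q"] fps_exp_power_mult by simp
    then show ?thesis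
      by (simp only: fps_of_nat fps_exp_add_mult fps_const_mult[symmetric] ac_simps)
  qed
  have "fps_exp r * (1 - fps_exp q) ^ k =
      (\<Sum>j\<le>k. fps_const ((-1) ^ j * of_nat (k choose j)) * fps_exp (r + of_nat j * q))"
    unfolding binomial sum_distrib_left summand ..
  then show ?thesis
    by (simp add: fps_sum_nth sum_divide_distrib)
qed

lemma fps_divide_const_eq_const_mult:
  fixes f :: "'a::field fps"
  assumes "c \<noteq> 0"
  shows "f / fps_const c = fps_const (1 / c) * f"
  using assms by (simp add: fps_divide_unit fps_const_inverse divide_inverse mult.commute)

lemma fps_exp_mult_power_one_minus_fps_exp_over_nth:
  fixes q r :: "'a::field_char_0"
  assumes "q \<noteq> 0"
  shows "(fps_exp r * ((1 - fps_exp q) / fps_const q) ^ k) $ n =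
    (\<Sum>j\<le>k. (-1) ^ j * of_nat (k choose j) * (r + of_nat j * q) ^ n) / (q ^ k * fact n)"
proof -
  have "(fps_exp r * ((1 - fps_exp q) / fps_const q) ^ k) $ n =
      (fps_const ((1 / q) ^ k) * (fps_exp r * (1 - fps_exp q) ^ k)) $ n"
    by (simp only: fps_divide_const_eq_const_mult[OF assms] power_mult_distrib fps_const_power
        mult.left_commute)
  then show ?thesis
    by (simp add: fps_exp_mult_one_minus_fps_exp_power_nth power_one_over)
qed

lemma bern_q_gf_eq_fps_exp_mult_compose:
  fixes q r :: real
  assumes "q \<noteq> 0"
  shows "bern_q_gf q r =
    fps_exp r * (Abs_fps (\<lambda>k. 1 / of_nat (Suc k)) oo ((1 - fps_exp q) / fps_const q))"
proof -
  define V where "V = (1 - fps_exp q) / fps_const q"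
  define A where "A = Abs_fps (\<lambda>k. 1 / of_nat (Suc k) :: real)"
  have V: "V = fps_const (1 / q) * (1 - fps_exp q)"
    unfolding V_def using assms by (rule fps_divide_const_eq_const_mult)
  have V0: "V $ 0 = 0" and V1: "V $ 1 = -1"
    using assms by (simp_all add: V)
  have "(\<lambda>k. fps_const (1 / of_nat (Suc k)) * V ^ Suc k) sums (V * (A oo V))"
  proof -
    have "(\<lambda>k. fps_const ((fps_X * A) $ k) * V ^ k) sums ((fps_X * A) oo V)"
      by (rule fps_compose_sums[OF V0])
    then have "(\<lambda>k. fps_const ((fps_X * A) $ Suc k) * V ^ Suc k) sums ((fps_X * A) oo V)"
      by (rule sums_Suc_if_zero_head[rotated]) simp
    moreover have "(fps_X * A) oo V = V * (A oo V)"
      by (simp add: fps_compose_mult_distrib[OF V0] V0)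
    ultimately show ?thesis
      by (simp add: A_def)
  qed
  then have series: "(\<Sum>k. fps_const (1 / of_nat (Suc k)) * V ^ Suc k) = V * (A oo V)"
    by (rule sums_unique[symmetric])
  have denom: "1 - fps_exp q = fps_const q * V"
    using assms by (simp add: V mult.assoc[symmetric] fps_const_mult[symmetric])
  have "fps_const q * V \<noteq> 0"
    using assms V1 by auto
  have "bern_q_gf q r = fps_exp r * (A oo V) * (fps_const q * V) / (fps_const q * V)"
    unfolding bern_q_gf_def V_def[symmetric] unfolding series denom by (simp only: ac_simps)
  also have "\<dots> = fps_exp r * (A oo V)"
    using \<open>fps_const q * V \<noteq> 0\<close> by (rule fps_divide_times_eq)
  finally show ?thesis
    unfolding A_def V_def .
qed

theorem mainTheorem3:
  fixes q r :: real and n :: nat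
  assumes "q > 0" and "r \<ge> 0"
  shows "bern_q q n r =
    (\<Sum>k=0..n. 1 / (q ^ k * of_nat (k + 1)) *
       (\<Sum>j=0..k. (-1) ^ j * of_nat (k choose j) * (r + of_nat j * q) ^ n))"
proof -
  define V where "V = (1 - fps_exp q) / fps_const q"
  define A where "A = Abs_fps (\<lambda>k. 1 / of_nat (Suc k) :: real)"
  have "q \<noteq> 0"
    using assms(1) by simp
  then have "V $ 0 = 0"
    unfolding V_def by (simp add: fps_divide_const_eq_const_mult)
  have "bern_q q n r = fact n * (fps_exp r * (A oo V)) $ n"
    unfolding bern_q_def bern_q_gf_eq_fps_exp_mult_compose[OF \<open>q \<noteq> 0\<close>] A_def V_def
    ..
  also have "\<dots> = fact n * (\<Sum>k\<le>n. 1 / of_nat (Suc k) *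
      ((\<Sum>j\<le>k. (-1) ^ j * of_nat (k choose j) * (r + of_nat j * q) ^ n) /
        (q ^ k * fact n)))"
    unfolding fps_mult_compose_nth[OF \<open>V $ 0 = 0\<close>]
    unfolding V_def fps_exp_mult_power_one_minus_fps_exp_over_nth[OF \<open>q \<noteq> 0\<close>]
    by (simp add: A_def)
  also have "\<dots> = (\<Sum>k=0..n. 1 / (q ^ k * of_nat (k + 1)) *
       (\<Sum>j=0..k. (-1) ^ j * of_nat (k choose j) * (r + of_nat j * q) ^ n))"
    unfolding sum_distrib_left[of "fact n"] atLeast0AtMost by (intro sum.cong refl) simp
  finally show ?thesis .
qed

end
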